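(* Let $\xi$ be a DoS sequence with infinitely many intervals $H_n$ that is not an edge case. Then $$\limsup_{n\to\infty}\frac{\lvert\Xi(0,h_n+\tau_n)\rvert}{h_n+\tau_n} = \inf\mathcal{D}(\xi)\quad\text{and}\quad \limsup_{n\to\infty}\frac{n}{h_n}=\inf\mathcal{F}(\xi).$$
   Context: A DoS sequence $\xi=\{H_n\}_{n\in\mathbb{N}_+}$ is a sequence of sets $H_n := \{h_n\}\cup[h_n,h_n+\tau_n)$, where $h_1\geqslant 0$, $\tau_n\geqslant 0$ and $h_{n+1} > h_n+\tau_n$ for all $n$. For $0\leqslant \tau\leqslant s$ let $\Xi(\tau,s) := \bigcup_n H_n\cap[\tau,s]$ and $n_\xi(\tau,s) := \operatorname{card}(\{h_n\}_n\cap[\tau,s])$; $\lvert\cdot\rvert$ denotes Lebesgue measure. A constant $B_d\in[0,1]$ is a duration-bound of $\xi$ if there is a constant $0<\kappa<+\infty$ with $\lvert \Xi(0,t)\rvert\leqslant \kappa + B_d t$ for all $t\geqslant 0$. A constant $B_f\in[0,+\infty)$ is a frequency-bound of $\xi$ if there is an integer $0<\Lambda<+\infty$ with $n_\xi(0,t)\leqslant \Lambda + B_f t$ for all $t\geqslant 0$; if no such finite $B_f$ exists, the frequency-bound is defined to be $+\infty$. $\mathcal{D}(\xi)$ and $\mathcal{F}(\xi)$ denote the sets of all duration-bounds and frequency-bounds of $\xi$. $\xi$ is an edge case if (i) $\inf\mathcal{D}(\xi)=1$, or (ii) $\inf\mathcal{F}(\xi)=+\infty$, or (iii) for every $\Gamma\in(0,+\infty)$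 there is $n$ with $\tau_n>\Gamma$. *)

theory Defs
  imports "HOL-Analysis.Analysis"
begin

text \<open>A DoS sequence is given by two real sequences h, tau indexed by n \<ge> 1
  (values at index 0 are irrelevant).\<close>

definition dos_seq :: "(nat \<Rightarrow> real) \<Rightarrow> (nat \<Rightarrow> real) \<Rightarrow> bool" where
  "dos_seq h \<tau> \<longleftrightarrow> h 1 \<ge> 0 \<and> (\<forall>n\<ge>1. \<tau> n \<ge> 0) \<and> (\<forall>n\<ge>1. h (Suc n) > h n + \<tau> n)"

definition H_int :: "(nat \<Rightarrow> real) \<Rightarrow> (nat \<Rightarrow> real) \<Rightarrow> nat \<Rightarrow> real set" where
  "H_int h \<tau> n = {h n} \<union> {h n ..< h n + \<tau> n}"

definition Xi :: "(nat \<Rightarrow> real) \<Rightarrow> (nat \<Rightarrow> real) \<Rightarrow> real \<Rightarrow> real \<Rightarrow> real set" where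
  "Xi h \<tau> a b = (\<Union>n\<in>{1..}. H_int h \<tau> n) \<inter> {a..b}"

definition n_xi :: "(nat \<Rightarrow> real) \<Rightarrow> real \<Rightarrow> real \<Rightarrow> ereal" where
  "n_xi h a b = (let S = {h n | n. n \<ge> 1} \<inter> {a..b} in
                  if finite S then ereal (real (card S)) else \<infinity>)"

definition dur_bounds :: "(nat \<Rightarrow> real) \<Rightarrow> (nat \<Rightarrow> real) \<Rightarrow> real set" where
  "dur_bounds h \<tau> = {Bd. 0 \<le> Bd \<and> Bd \<le> 1 \<and>
      (\<exists>\<kappa>>0. \<forall>t\<ge>0. measure lborel (Xi h \<tau> 0 t) \<le> \<kappa> + Bd * t)}"

definition freq_bounds :: "(nat \<Rightarrow> real) \<Rightarrow> real set" where
  "freq_bounds h = {Bf. 0 \<le> Bf \<and>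
      (\<exists>\<Lambda>::nat. \<Lambda> > 0 \<and> (\<forall>t\<ge>0. n_xi h 0 t \<le> ereal (real \<Lambda> + Bf * t)))}"

text \<open>Infima taken in the extended reals; the infimum of an empty set of
  frequency bounds is +infinity, as in the paper's convention.\<close>
definition inf_D :: "(nat \<Rightarrow> real) \<Rightarrow> (nat \<Rightarrow> real) \<Rightarrow> ereal" where
  "inf_D h \<tau> = Inf (ereal ` dur_bounds h \<tau>)"

definition inf_F :: "(nat \<Rightarrow> real) \<Rightarrow> ereal" where
  "inf_F h = Inf (ereal ` freq_bounds h)"

definition edge_case :: "(nat \<Rightarrow> real) \<Rightarrow> (nat \<Rightarrow> real) \<Rightarrow> bool" where
  "edge_case h \<tau> \<longleftrightarrow> inf_D h \<tau> = 1 \<or> inf_F h = \<infinity> \<or>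
      (\<forall>\<Gamma>>0. \<exists>n\<ge>1. \<tau> n > \<Gamma>)"

end

theory Submission
  imports Defs
begin

text \<open>Both limsups have the form \<open>limsup a\<^sub>n / x\<^sub>n\<close> with \<open>x\<^sub>n \<rightarrow> \<infinity>\<close>, and such a limsup equals the
  infimum of the slopes \<open>B\<close> admitting an eventual bound \<open>a\<^sub>n \<le> \<kappa> + B x\<^sub>n\<close>. So it suffices to compare
  these bounds along the sequence with the bounds for all times \<open>t\<close> that define \<open>\<D>(\<xi>)\<close> and \<open>\<F>(\<xi>)\<close>.
  For frequencies, at least \<open>n\<close> attacks have started by time \<open>h\<^sub>n\<close>; conversely, if \<open>n \<le> c h\<^sub>n\<close> for
  \<open>n \<ge> N\<close>, then every onset \<open>h\<^sub>n \<le> t\<close> has index \<open>n \<le> N + c t\<close>. For durations, the attacked time does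
  not grow between the end \<open>h\<^sub>m + \<tau>\<^sub>m\<close> of an attack and the next onset, so a bound at the attack
  ends transfers to all times, at the cost of the overshoot \<open>h\<^sub>m + \<tau>\<^sub>m - t \<le> \<Gamma>\<close> when the durations
  are bounded by \<open>\<Gamma>\<close>. A finite frequency bound is also what forces \<open>h\<^sub>n \<rightarrow> \<infinity>\<close>.\<close>

lemma limsup_ratio_le_of_affine_bound:
  fixes a x :: "nat \<Rightarrow> real"
  assumes x: "filterlim x at_top sequentially"
    and bound: "\<forall>\<^sub>F n in sequentially. a n \<le> \<kappa> + B * x n"
  shows "limsup (\<lambda>n. ereal (a n / x n)) \<le> ereal B"
proof -
  have "\<forall>\<^sub>F n in sequentially. 0 < x n"
    using x by (simp add: filterlim_at_top_dense)
  with bound have "\<forall>\<^sub>F n in sequentially. ereal (a n / x n) \<le> ereal (\<kappa> / x n + B)"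
  proof eventually_elim
    case (elim n)
    then have "a n / x n \<le> (\<kappa> + B * x n) / x n"
      by (simp add: divide_right_mono)
    also have "\<dots> = \<kappa> / x n + B"
      using elim by (simp add: field_simps)
    finally show ?case by simp
  qed
  then have "limsup (\<lambda>n. ereal (a n / x n)) \<le> limsup (\<lambda>n. ereal (\<kappa> / x n + B))"
    by (rule Limsup_mono)
  also have "\<dots> = ereal B"
  proof (rule lim_imp_Limsup)
    have "((\<lambda>n. \<kappa> / x n) \<longlongrightarrow> 0) sequentially"
      by (rule tendsto_divide_0[OF tendsto_const filterlim_at_top_imp_at_infinity[OF x]])
    then have "((\<lambda>n. \<kappa> / x n + B) \<longlongrightarrow> 0 + B) sequentially"
      by (intro tendsto_add tendsto_const)
    then show "((\<lambda>n. ereal (\<kappa> / x n + B)) \<longlongrightarrow> ereal B) sequentially"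
      by (intro tendsto_ereal) simp
  qed simp
  finally show ?thesis .
qed

lemma limsup_ratio_eq_Inf_slopes:
  fixes a x :: "nat \<Rightarrow> real" and S :: "real set"
  assumes x: "filterlim x at_top sequentially"
    and a_nonneg: "\<forall>\<^sub>F n in sequentially. 0 \<le> a n"
    and slope_bound: "\<And>B. B \<in> S \<Longrightarrow> \<exists>\<kappa>. \<forall>\<^sub>F n in sequentially. a n \<le> \<kappa> + B * x n"
    and slope_mem: "\<And>c. 0 < c \<Longrightarrow> \<forall>\<^sub>F n in sequentially. a n \<le> c * x n \<Longrightarrow> \<exists>B\<in>S. B \<le> c"
  shows "limsup (\<lambda>n. ereal (a n / x n)) = Inf (ereal ` S)"
proof (rule antisym)
  show "limsup (\<lambda>n. ereal (a n / x n)) \<le> Inf (ereal ` S)"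
    using slope_bound limsup_ratio_le_of_affine_bound[OF x] by (blast intro: Inf_greatest)
next
  have x_pos: "\<forall>\<^sub>F n in sequentially. 0 < x n"
    using x by (simp add: filterlim_at_top_dense)
  have "0 \<le> limsup (\<lambda>n. ereal (a n / x n))"
    by (rule le_Limsup) (use eventually_conj[OF a_nonneg x_pos] in \<open>auto elim: eventually_mono\<close>)
  show "Inf (ereal ` S) \<le> limsup (\<lambda>n. ereal (a n / x n))"
  proof (rule dense_ge)
    fix y assume "limsup (\<lambda>n. ereal (a n / x n)) < y"
    then obtain c where c: "limsup (\<lambda>n. ereal (a n / x n)) < ereal c" "ereal c < y"
      using ereal_dense2 by blast
    have "0 < c"
      using order.strict_trans1[OF \<open>0 \<le> limsup _\<close> c(1)] by simp
    have "\<forall>\<^sub>F n in sequentially. a n \<le> c * x n"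
      using Limsup_lessD[OF c(1)] x_pos by eventually_elim (simp add: divide_less_eq)
    then obtain B where "B \<in> S" "B \<le> c"
      using slope_mem \<open>0 < c\<close> by blast
    then have "Inf (ereal ` S) \<le> ereal c"
      by (meson INF_lower2 ereal_less_eq(3))
    then show "Inf (ereal ` S) \<le> y"
      using c(2) by simp
  qed
qed

lemma at_top_crossing_index:
  fixes h :: "nat \<Rightarrow> real"
  assumes "filterlim h at_top sequentially" "h N \<le> t"
  obtains m where "N \<le> m" "h m \<le> t" "t < h (Suc m)"
proof -
  obtain n where "t < h (N + n)"
    using assms(1) unfolding filterlim_at_top_dense eventually_sequentially by (metis le_add2)
  then obtain k where "\<not> t < h (N + k)" "t < h (N + Suc k)"
    using ex_least_nat_less[of "\<lambda>i. t < h (N + i)"] assms(2) by auto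
  then show thesis
    using that[of "N + k"] by simp
qed

lemma dos_seq_duration_nonneg: "dos_seq h \<tau> \<Longrightarrow> 1 \<le> n \<Longrightarrow> 0 \<le> \<tau> n"
  unfolding dos_seq_def by simp

lemma dos_seq_end_less_onset:
  assumes "dos_seq h \<tau>" "1 \<le> m" "m < n"
  shows "h m + \<tau> m < h n"
proof -
  from \<open>m < n\<close> have "Suc m \<le> n" by simp
  then show ?thesis
  proof (induction n rule: dec_induct)
    case base
    show ?case using assms(1,2) unfolding dos_seq_def by simp
  next
    case (step n)
    have "h n + \<tau> n < h (Suc n)" "0 \<le> \<tau> n"
      using assms(1,2) step.hyps(1) unfolding dos_seq_def by auto
    with step.IH show ?case by linarith
  qed
qed

lemma dos_seq_onset_less:
  assumes "dos_seq h \<tau>" "1 \<le> m" "m < n"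
  shows "h m < h n"
  using dos_seq_end_less_onset[OF assms] dos_seq_duration_nonneg[OF assms(1,2)] by linarith

lemma dos_seq_onset_mono:
  assumes "dos_seq h \<tau>" "1 \<le> m" "m \<le> n"
  shows "h m \<le> h n"
  using dos_seq_onset_less[OF assms(1,2)] assms(3) by (cases "m = n") (auto intro: less_imp_le)

lemma dos_seq_onset_nonneg:
  assumes "dos_seq h \<tau>" "1 \<le> n"
  shows "0 \<le> h n"
  using dos_seq_onset_mono[OF assms(1) order.refl assms(2)] assms(1) unfolding dos_seq_def by simp

lemma Xi_sets: "Xi h \<tau> a b \<in> sets lborel"
  unfolding Xi_def H_int_def by (intro sets.Int sets.countable_UN'') auto

lemma Xi_fmeasurable: "Xi h \<tau> a b \<in> fmeasurable lborel"
  by (rule fmeasurableI2[OF fmeasurable_compact[OF compact_Icc] _ Xi_sets]) (auto simp: Xi_def)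

lemma measure_Xi_mono:
  "Xi h \<tau> 0 s \<subseteq> Xi h \<tau> 0 t \<Longrightarrow> measure lborel (Xi h \<tau> 0 s) \<le> measure lborel (Xi h \<tau> 0 t)"
  by (rule measure_mono_fmeasurable[OF _ Xi_sets Xi_fmeasurable])

lemma measure_Xi_le:
  assumes "a \<le> b"
  shows "measure lborel (Xi h \<tau> a b) \<le> b - a"
proof -
  have "measure lborel (Xi h \<tau> a b) \<le> measure lborel {a..b}"
    by (rule measure_mono_fmeasurable[OF _ Xi_sets fmeasurable_compact[OF compact_Icc]])
      (auto simp: Xi_def)
  then show ?thesis
    using assms by simp
qed

lemma Xi_subset_before_next_onset:
  assumes "dos_seq h \<tau>" "1 \<le> m" "t < h (Suc m)"
  shows "Xi h \<tau> 0 t \<subseteq> Xi h \<tau> 0 (h m + \<tau> m)"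
proof
  fix x assume "x \<in> Xi h \<tau> 0 t"
  then obtain k where k: "1 \<le> k" "x \<in> H_int h \<tau> k" "0 \<le> x" "x \<le> t"
    unfolding Xi_def by auto
  have "k \<le> m"
  proof (rule ccontr)
    assume "\<not> k \<le> m"
    then have "h (Suc m) \<le> h k"
      using dos_seq_onset_mono[OF assms(1)] assms(2) by simp
    with k assms(3) show False
      unfolding H_int_def by auto
  qed
  then have "h k + \<tau> k \<le> h m + \<tau> m"
    using dos_seq_end_less_onset[OF assms(1) k(1), of m] dos_seq_duration_nonneg[OF assms(1,2)]
    by (cases "k = m") auto
  with k dos_seq_duration_nonneg[OF assms(1) k(1)] show "x \<in> Xi h \<tau> 0 (h m + \<tau> m)"
    unfolding Xi_def H_int_def by auto
qed

lemma n_xi_ge_onset_index: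
  assumes "dos_seq h \<tau>" "1 \<le> n"
  shows "ereal (real n) \<le> n_xi h 0 (h n)"
proof -
  define S where "S = {h k | k. k \<ge> 1} \<inter> {0..h n}"
  have "h ` {1..n} \<subseteq> S"
    using dos_seq_onset_nonneg[OF assms(1)] dos_seq_onset_mono[OF assms(1)] unfolding S_def by auto
  moreover have "strict_mono_on {1..n} h"
    using dos_seq_onset_less[OF assms(1)] by (intro strict_mono_onI) auto
  ultimately have "finite S \<Longrightarrow> n \<le> card S"
    using card_mono[of S "h ` {1..n}"] card_image[OF strict_mono_on_imp_inj_on] by fastforce
  then show ?thesis
    unfolding n_xi_def S_def[symmetric] by simp
qed

lemma n_xi_le_of_index_bound:
  fixes K :: real
  assumes "0 \<le> K" and "\<And>n. 1 \<le> n \<Longrightarrow> a \<le> h n \<Longrightarrow> h n \<le> b \<Longrightarrow> real n \<le> K"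
  shows "n_xi h a b \<le> ereal K"
proof -
  define S where "S = {h n | n. n \<ge> 1} \<inter> {a..b}"
  have "S \<subseteq> h ` {1..nat \<lfloor>K\<rfloor>}"
    using assms(2) by (auto simp: S_def le_nat_floor)
  then have "finite S" and "card S \<le> card (h ` {1..nat \<lfloor>K\<rfloor>})"
    by (auto intro: finite_surj card_mono)
  moreover have "card (h ` {1..nat \<lfloor>K\<rfloor>}) \<le> nat \<lfloor>K\<rfloor>"
    using card_image_le[of "{1..nat \<lfloor>K\<rfloor>}" h] by simp
  ultimately have "real (card S) \<le> K"
    using assms(1) by linarith
  with \<open>finite S\<close> show ?thesis
    unfolding n_xi_def S_def[symmetric] by simp
qed

lemma freq_bound_at_onsets:
  assumes "dos_seq h \<tau>" "B \<in> freq_bounds h"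
  shows "\<exists>\<Lambda>. \<forall>n\<ge>1. real n \<le> \<Lambda> + B * h n"
proof -
  obtain \<Lambda> :: nat where \<Lambda>: "\<forall>t\<ge>0. n_xi h 0 t \<le> ereal (real \<Lambda> + B * t)"
    using assms(2) unfolding freq_bounds_def by auto
  have "real n \<le> real \<Lambda> + B * h n" if "1 \<le> n" for n
    using order.trans[OF n_xi_ge_onset_index[OF assms(1) that]
        \<Lambda>[rule_format, OF dos_seq_onset_nonneg[OF assms(1) that]]]
    by simp
  then show ?thesis
    by blast
qed

lemma dos_seq_onsets_at_top:
  assumes "dos_seq h \<tau>" "freq_bounds h \<noteq> {}"
  shows "filterlim h at_top sequentially"
proof -
  obtain B where B: "B \<in> freq_bounds h"
    using assms(2) by blast
  then have "0 \<le> B"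
    unfolding freq_bounds_def by simp
  obtain \<Lambda> where \<Lambda>: "\<And>n. 1 \<le> n \<Longrightarrow> real n \<le> \<Lambda> + B * h n"
    using freq_bound_at_onsets[OF assms(1) B] by blast
  show ?thesis
  proof (subst filterlim_at_top, intro allI)
    fix Z :: real
    define N where "N = nat \<lceil>\<Lambda> + B * max Z 0\<rceil> + 1"
    have "1 \<le> N"
      unfolding N_def by simp
    have "\<Lambda> + B * max Z 0 < real N"
      using real_nat_ceiling_ge[of "\<Lambda> + B * max Z 0"] unfolding N_def by simp
    then have "B * max Z 0 < B * h N"
      using \<Lambda>[OF \<open>1 \<le> N\<close>] by linarith
    then have "max Z 0 < h N"
      using \<open>0 \<le> B\<close> by (rule mult_left_less_imp_less)
    then have "Z \<le> h N"
      by simp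
    then have "Z \<le> h n" if "N \<le> n" for n
      using dos_seq_onset_mono[OF assms(1) \<open>1 \<le> N\<close> that] by linarith
    then show "\<forall>\<^sub>F n in sequentially. Z \<le> h n"
      unfolding eventually_sequentially by blast
  qed
qed

lemma freq_bounds_memI:
  assumes "dos_seq h \<tau>" "0 \<le> c" "\<forall>\<^sub>F n in sequentially. real n \<le> c * h n"
  shows "c \<in> freq_bounds h"
proof -
  obtain N where N: "\<And>n. N \<le> n \<Longrightarrow> real n \<le> c * h n"
    using assms(3) unfolding eventually_sequentially by blast
  have "n_xi h 0 t \<le> ereal (real (Suc N) + c * t)" if "0 \<le> t" for t
  proof (rule n_xi_le_of_index_bound)
    show "0 \<le> real (Suc N) + c * t"
      using assms(2) that by simp
    fix n assume "1 \<le> n" "0 \<le> h n" "h n \<le> t"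
    show "real n \<le> real (Suc N) + c * t"
    proof (cases "N \<le> n")
      case True
      then have "real n \<le> c * h n"
        by (rule N)
      also have "\<dots> \<le> c * t"
        using \<open>h n \<le> t\<close> assms(2) by (rule mult_left_mono)
      finally show ?thesis by simp
    next
      case False
      then have "real n \<le> real N"
        by simp
      moreover have "0 \<le> c * t"
        using assms(2) that by simp
      ultimately show ?thesis
        by simp
    qed
  qed
  then show ?thesis
    using assms(2) unfolding freq_bounds_def by (blast intro: zero_less_Suc)
qed

lemma limsup_onset_ratio:
  assumes "dos_seq h \<tau>" "freq_bounds h \<noteq> {}"
  shows "limsup (\<lambda>n. ereal (real n / h n)) = inf_F h"
  unfolding inf_F_def
proof (rule limsup_ratio_eq_Inf_slopes)
  show "filterlim h at_top sequentially"
    by (rule dos_seq_onsets_at_top[OF assms])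
  show "\<forall>\<^sub>F n in sequentially. 0 \<le> real n"
    by simp
  show "\<exists>\<kappa>. \<forall>\<^sub>F n in sequentially. real n \<le> \<kappa> + B * h n" if "B \<in> freq_bounds h" for B
    using freq_bound_at_onsets[OF assms(1) that] eventually_sequentiallyI[of 1] by meson
  show "\<exists>B\<in>freq_bounds h. B \<le> c" if "0 < c" "\<forall>\<^sub>F n in sequentially. real n \<le> c * h n" for c
    using freq_bounds_memI[OF assms(1) _ that(2)] that(1) by auto
qed

lemma dur_bounds_memI:
  assumes dos: "dos_seq h \<tau>" and h_top: "filterlim h at_top sequentially"
    and \<Gamma>: "\<And>n. 1 \<le> n \<Longrightarrow> \<tau> n \<le> \<Gamma>" and "0 \<le> c"
    and ends: "\<forall>\<^sub>F n in sequentially.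
      measure lborel (Xi h \<tau> 0 (h n + \<tau> n)) \<le> c * (h n + \<tau> n)"
  shows "min c 1 \<in> dur_bounds h \<tau>"
proof -
  obtain N0 where N0: "\<And>n. N0 \<le> n \<Longrightarrow> measure lborel (Xi h \<tau> 0 (h n + \<tau> n)) \<le> c * (h n + \<tau> n)"
    using ends unfolding eventually_sequentially by blast
  define N where "N = Suc N0"
  have "1 \<le> N"
    unfolding N_def by simp
  have "0 \<le> h N" "0 \<le> c * \<Gamma>"
    using dos_seq_onset_nonneg[OF dos \<open>1 \<le> N\<close>] \<Gamma>[OF \<open>1 \<le> N\<close>]
      dos_seq_duration_nonneg[OF dos \<open>1 \<le> N\<close>] \<open>0 \<le> c\<close> by simp_all
  \<comment> \<open>\<open>\<kappa>\<close> covers the times before \<open>h N\<close> and the overshoot \<open>c \<Gamma>\<close> of the last attack end past \<open>t\<close>\<close>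
  define \<kappa> where "\<kappa> = h N + c * \<Gamma> + 1"
  have "0 < \<kappa>"
    unfolding \<kappa>_def using \<open>0 \<le> h N\<close> \<open>0 \<le> c * \<Gamma>\<close> by linarith
  have bound: "measure lborel (Xi h \<tau> 0 t) \<le> \<kappa> + c * t" if "0 \<le> t" for t
  proof (cases "t < h N")
    case True
    moreover have "0 \<le> c * t"
      using \<open>0 \<le> c\<close> that by simp
    ultimately show ?thesis
      using measure_Xi_le[OF that, of h \<tau>] \<open>0 \<le> c * \<Gamma>\<close> unfolding \<kappa>_def by simp
  next
    case False
    then obtain m where m: "N \<le> m" "h m \<le> t" "t < h (Suc m)"
      using at_top_crossing_index[OF h_top] by (metis not_less)
    then have "1 \<le> m"
      using \<open>1 \<le> N\<close> by simp
    have "measure lborel (Xi h \<tau> 0 t) \<le> measure lborel (Xi h \<tau> 0 (h m + \<tau> m))"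
      by (rule measure_Xi_mono[OF Xi_subset_before_next_onset[OF dos \<open>1 \<le> m\<close> m(3)]])
    also have "\<dots> \<le> c * (h m + \<tau> m)"
      using N0 m(1) unfolding N_def by simp
    also have "\<dots> \<le> c * (t + \<Gamma>)"
      using m(2) \<Gamma>[OF \<open>1 \<le> m\<close>] \<open>0 \<le> c\<close> by (intro mult_left_mono) auto
    also have "\<dots> \<le> \<kappa> + c * t"
      using \<open>0 \<le> h N\<close> unfolding \<kappa>_def by (simp add: algebra_simps)
    finally show ?thesis .
  qed
  have "measure lborel (Xi h \<tau> 0 t) \<le> \<kappa> + min c 1 * t" if "0 \<le> t" for t
    using bound[OF that] measure_Xi_le[OF that, of h \<tau>] \<open>0 < \<kappa>\<close> by (simp add: min_def)
  then show ?thesis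
    using \<open>0 \<le> c\<close> \<open>0 < \<kappa>\<close> unfolding dur_bounds_def by auto
qed

lemma limsup_duration_ratio:
  assumes dos: "dos_seq h \<tau>" and "freq_bounds h \<noteq> {}" and \<Gamma>: "\<And>n. 1 \<le> n \<Longrightarrow> \<tau> n \<le> \<Gamma>"
  shows "limsup (\<lambda>n. ereal (measure lborel (Xi h \<tau> 0 (h n + \<tau> n)) / (h n + \<tau> n))) = inf_D h \<tau>"
  unfolding inf_D_def
proof (rule limsup_ratio_eq_Inf_slopes)
  have h_top: "filterlim h at_top sequentially"
    by (rule dos_seq_onsets_at_top[OF dos assms(2)])
  have ends_nonneg: "\<forall>\<^sub>F n in sequentially. 0 \<le> h n + \<tau> n"
    by (rule eventually_sequentiallyI[of 1])
      (simp add: dos_seq_onset_nonneg[OF dos] dos_seq_duration_nonneg[OF dos])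
  show "filterlim (\<lambda>n. h n + \<tau> n) at_top sequentially"
    by (rule filterlim_at_top_mono[OF h_top])
      (use dos_seq_duration_nonneg[OF dos] in \<open>auto intro: eventually_sequentiallyI[of 1]\<close>)
  show "\<forall>\<^sub>F n in sequentially. 0 \<le> measure lborel (Xi h \<tau> 0 (h n + \<tau> n))"
    by simp
  show "\<exists>\<kappa>. \<forall>\<^sub>F n in sequentially.
      measure lborel (Xi h \<tau> 0 (h n + \<tau> n)) \<le> \<kappa> + B * (h n + \<tau> n)"
    if B: "B \<in> dur_bounds h \<tau>" for B
  proof -
    obtain \<kappa> where "\<forall>t\<ge>0. measure lborel (Xi h \<tau> 0 t) \<le> \<kappa> + B * t"
      using B unfolding dur_bounds_def by auto
    with ends_nonneg have "\<forall>\<^sub>F n in sequentially.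
        measure lborel (Xi h \<tau> 0 (h n + \<tau> n)) \<le> \<kappa> + B * (h n + \<tau> n)"
      by (simp add: eventually_mono)
    then show ?thesis ..
  qed
  show "\<exists>B\<in>dur_bounds h \<tau>. B \<le> c"
    if "0 < c" "\<forall>\<^sub>F n in sequentially. measure lborel (Xi h \<tau> 0 (h n + \<tau> n)) \<le> c * (h n + \<tau> n)"
    for c
  proof
    show "min c 1 \<in> dur_bounds h \<tau>"
      using \<Gamma> that by (intro dur_bounds_memI[OF dos h_top]) auto
  qed simp
qed

text \<open>Clause (i) of the edge-case condition is not needed.\<close>

theorem lemma2:
  fixes h \<tau> :: "nat \<Rightarrow> real"
  assumes "dos_seq h \<tau>" and "\<not> edge_case h \<tau>"
  shows "limsup (\<lambda>n. ereal (measure lborel (Xi h \<tau> 0 (h n + \<tau> n)) / (h n + \<tau> n))) = inf_D h \<tau>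
     \<and> limsup (\<lambda>n. ereal (real n / h n)) = inf_F h"
proof -
  have "freq_bounds h \<noteq> {}"
    using assms(2) unfolding edge_case_def inf_F_def by (auto simp: top_ereal_def)
  moreover obtain \<Gamma> where "\<And>n. 1 \<le> n \<Longrightarrow> \<tau> n \<le> \<Gamma>"
    using assms(2) unfolding edge_case_def by (auto simp: not_less)
  ultimately show ?thesis
    using limsup_duration_ratio limsup_onset_ratio assms(1) by blast
qed

end
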